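(* Assume $\Sigma_n$ and $V_n$ are invertible and $\mathcal{D}_n^{\Sigma} := \|\Sigma_n^{-1/2}\widehat{\Sigma}_n\Sigma_n^{-1/2} - I_d\|_{\mathrm{op}} < 1$. Then \[ \max_{1\le j\le d}\left|\frac{\widehat{\beta}_j - \beta_j - n^{-1}\sum_{i=1}^n \psi_{ij}}{\sqrt{(\Sigma_n^{-1}V_n\Sigma_n^{-1})_{jj}}}\right| \le \kappa(\Sigma_n^{-1/2}V_n^{1/2})\frac{\mathcal{D}_n^{\Sigma}}{1 - \mathcal{D}_n^{\Sigma}}\Big\|\frac{1}{n}\sum_{i=1}^n \psi_i\Big\|_{\Sigma_n V^{-1}_n\Sigma_n}, \] where $\psi_i := \Sigma_n^{-1}X_i(Y_i-X_i^\top\beta)$ and $\psi_{ij}$ is its $j$-th coordinate.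
   Context: Let $(X_1,Y_1),\dots,(X_n,Y_n)$ be random elements of $\mathbb{R}^d\times\mathbb{R}$ (not necessarily independent or identically distributed) with finite second moments. Define $\Sigma_n := n^{-1}\sum_{i=1}^n\mathbb{E}[X_iX_i^\top]$, $\Gamma_n := n^{-1}\sum_{i=1}^n\mathbb{E}[X_iY_i]$, $\beta := \Sigma_n^{-1}\Gamma_n$, $\widehat{\Sigma}_n := n^{-1}\sum_{i=1}^n X_iX_i^\top$, $\widehat{\Gamma}_n := n^{-1}\sum_{i=1}^n X_iY_i$, $\widehat\beta := \widehat{\Sigma}_n^{-1}\widehat{\Gamma}_n$, and $V_n := \mathrm{Var}\big(n^{-1}\sum_{i=1}^n X_i(Y_i - X_i^\top\beta)\big)$. For positive definite $A$, $\|x\|_A := \sqrt{x^\top A x}$; $\kappa(A) := \|A^{-1}\|_{\mathrm{op}}\|A\|_{\mathrm{op}}$. *)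

theory Defs
  imports "HOL-Probability.Probability"
begin

definition outer :: "real^'d \<Rightarrow> real^'d \<Rightarrow> real^'d^'d" where
  "outer x y = (\<chi> i j. x$i * y$j)"

definition psd_mat :: "real^'d^'d \<Rightarrow> bool" where
  "psd_mat A \<longleftrightarrow> transpose A = A \<and> (\<forall>x. 0 \<le> x \<bullet> (A *v x))"

definition mat_sqrt :: "real^'d^'d \<Rightarrow> real^'d^'d" where
  "mat_sqrt A = (THE S. psd_mat S \<and> S ** S = A)"

definition op_norm :: "real^'d^'d \<Rightarrow> real" where
  "op_norm A = onorm (\<lambda>x. A *v x)"

definition cond_num :: "real^'d^'d \<Rightarrow> real" where
  "cond_num A = op_norm (matrix_inv A) * op_norm A"

definition wnorm :: "real^'d^'d \<Rightarrow> real^'d \<Rightarrow> real" where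
  "wnorm A x = sqrt (x \<bullet> (A *v x))"

definition Sigma_n :: "'a measure \<Rightarrow> (nat \<Rightarrow> 'a \<Rightarrow> real^'d) \<Rightarrow> nat \<Rightarrow> real^'d^'d" where
  "Sigma_n M X n = (1 / real n) *\<^sub>R (\<Sum>i\<in>{1..n}. integral\<^sup>L M (\<lambda>\<omega>. outer (X i \<omega>) (X i \<omega>)))"

definition Gamma_n :: "'a measure \<Rightarrow> (nat \<Rightarrow> 'a \<Rightarrow> real^'d) \<Rightarrow> (nat \<Rightarrow> 'a \<Rightarrow> real) \<Rightarrow> nat \<Rightarrow> real^'d" where
  "Gamma_n M X Y n = (1 / real n) *\<^sub>R (\<Sum>i\<in>{1..n}. integral\<^sup>L M (\<lambda>\<omega>. Y i \<omega> *\<^sub>R X i \<omega>))"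

definition beta_pop :: "'a measure \<Rightarrow> (nat \<Rightarrow> 'a \<Rightarrow> real^'d) \<Rightarrow> (nat \<Rightarrow> 'a \<Rightarrow> real) \<Rightarrow> nat \<Rightarrow> real^'d" where
  "beta_pop M X Y n = matrix_inv (Sigma_n M X n) *v Gamma_n M X Y n"

definition Sigma_hat :: "(nat \<Rightarrow> 'a \<Rightarrow> real^'d) \<Rightarrow> nat \<Rightarrow> 'a \<Rightarrow> real^'d^'d" where
  "Sigma_hat X n \<omega> = (1 / real n) *\<^sub>R (\<Sum>i\<in>{1..n}. outer (X i \<omega>) (X i \<omega>))"

definition Gamma_hat :: "(nat \<Rightarrow> 'a \<Rightarrow> real^'d) \<Rightarrow> (nat \<Rightarrow> 'a \<Rightarrow> real) \<Rightarrow> nat \<Rightarrow> 'a \<Rightarrow> real^'d" where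
  "Gamma_hat X Y n \<omega> = (1 / real n) *\<^sub>R (\<Sum>i\<in>{1..n}. Y i \<omega> *\<^sub>R X i \<omega>)"

definition beta_hat :: "(nat \<Rightarrow> 'a \<Rightarrow> real^'d) \<Rightarrow> (nat \<Rightarrow> 'a \<Rightarrow> real) \<Rightarrow> nat \<Rightarrow> 'a \<Rightarrow> real^'d" where
  "beta_hat X Y n \<omega> = matrix_inv (Sigma_hat X n \<omega>) *v Gamma_hat X Y n \<omega>"

definition vcov :: "'a measure \<Rightarrow> ('a \<Rightarrow> real^'d) \<Rightarrow> real^'d^'d" where
  "vcov M Z = integral\<^sup>L M (\<lambda>\<omega>. outer (Z \<omega> - integral\<^sup>L M Z) (Z \<omega> - integral\<^sup>L M Z))"

definition V_n :: "'a measure \<Rightarrow> (nat \<Rightarrow> 'a \<Rightarrow> real^'d) \<Rightarrow> (nat \<Rightarrow> 'a \<Rightarrow> real) \<Rightarrow> nat \<Rightarrow> real^'d^'d" where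
  "V_n M X Y n = vcov M (\<lambda>\<omega>. (1 / real n) *\<^sub>R
      (\<Sum>i\<in>{1..n}. (Y i \<omega> - X i \<omega> \<bullet> beta_pop M X Y n) *\<^sub>R X i \<omega>))"

definition psi :: "'a measure \<Rightarrow> (nat \<Rightarrow> 'a \<Rightarrow> real^'d) \<Rightarrow> (nat \<Rightarrow> 'a \<Rightarrow> real) \<Rightarrow> nat \<Rightarrow> nat \<Rightarrow> 'a \<Rightarrow> real^'d" where
  "psi M X Y n i \<omega> = matrix_inv (Sigma_n M X n) *v ((Y i \<omega> - X i \<omega> \<bullet> beta_pop M X Y n) *\<^sub>R X i \<omega>)"

definition D_Sigma :: "'a measure \<Rightarrow> (nat \<Rightarrow> 'a \<Rightarrow> real^'d) \<Rightarrow> nat \<Rightarrow> 'a \<Rightarrow> real" where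
  "D_Sigma M X n \<omega> = op_norm (matrix_inv (mat_sqrt (Sigma_n M X n)) ** Sigma_hat X n \<omega>
       ** matrix_inv (mat_sqrt (Sigma_n M X n)) - mat 1)"

end

theory Submission
  imports Defs
begin

text \<open>
  Write \<open>P = \<Sigma>\<^sub>n\<^sup>1\<^sup>/\<^sup>2\<close>, \<open>W = V\<^sub>n\<^sup>1\<^sup>/\<^sup>2\<close>, \<open>\<Sigma>'\<close> for the sample Gram matrix and
  \<open>g = n\<^sup>-\<^sup>1 \<Sum> X\<^sub>i (Y\<^sub>i - X\<^sub>i\<^sup>T \<beta>)\<close>. Then \<open>\<beta>' - \<beta> = \<Sigma>'\<^sup>-\<^sup>1 g\<close> and \<open>n\<^sup>-\<^sup>1 \<Sum> \<psi>\<^sub>i = \<Sigma>\<^sub>n\<^sup>-\<^sup>1 g\<close>, so with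
  \<open>A = P\<^sup>-\<^sup>1 \<Sigma>' P\<^sup>-\<^sup>1\<close> the remainder is \<open>P\<^sup>-\<^sup>1 r\<close>, \<open>r = (A\<^sup>-\<^sup>1 - I) P\<^sup>-\<^sup>1 g\<close>, and a Neumann-series
  argument gives \<open>\<parallel>r\<parallel> \<le> D/(1 - D) \<parallel>P\<^sup>-\<^sup>1 g\<parallel>\<close> because \<open>\<parallel>A - I\<parallel> = D < 1\<close>. The \<open>j\<close>-th coordinate
  of \<open>P\<^sup>-\<^sup>1 r\<close> is the inner product of \<open>W \<Sigma>\<^sub>n\<^sup>-\<^sup>1 e\<^sub>j\<close>, whose length is the standard error in the
  denominator, with \<open>W\<^sup>-\<^sup>1 P r\<close>. Cauchy-Schwarz, \<open>\<parallel>W\<^sup>-\<^sup>1 P\<parallel> \<parallel>P\<^sup>-\<^sup>1 W\<parallel> = \<kappa>(P\<^sup>-\<^sup>1 W)\<close> and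
  the identity \<open>\<parallel>W\<^sup>-\<^sup>1 g\<parallel> = wnorm (\<Sigma>\<^sub>n V\<^sub>n\<^sup>-\<^sup>1 \<Sigma>\<^sub>n) (n\<^sup>-\<^sup>1 \<Sum> \<psi>\<^sub>i)\<close> finish the bound. The argument
  is deterministic.
  The square roots exist and are unique by the spectral theorem for symmetric matrices, which
  follows by maximising the quadratic form on the unit sphere of invariant subspaces.
\<close>

section \<open>Positive semidefinite matrices\<close>

lemma quadratic_nonneg_imp_linear_coeff_eq_0:
  fixes a b :: real
  assumes "\<And>t. 0 \<le> 2 * t * a + t\<^sup>2 * b"
  shows "a = 0"
proof -
  have b: "0 \<le> b" using assms[of 1] assms[of "-1"] by simp
  define t where "t = - a / (b + 1)"
  have t: "(b + 1) * t = - a" using b by (simp add: t_def)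
  have "0 \<le> (b + 1)\<^sup>2 * (2 * t * a + t\<^sup>2 * b)"
    by (intro mult_nonneg_nonneg zero_le_power2 assms)
  also have "\<dots> = 2 * ((b + 1) * t) * a * (b + 1) + ((b + 1) * t)\<^sup>2 * b"
    by (simp add: power2_eq_square algebra_simps)
  also have "\<dots> = - a\<^sup>2 * (b + 2)"
    unfolding t by (simp add: power2_eq_square algebra_simps)
  finally show ?thesis using b by (simp add: mult_le_0_iff)
qed

lemma nonneg_form_vanishing_imp_orthogonal:
  fixes f :: "'a::real_inner \<Rightarrow> 'a"
  assumes f: "linear f" and sym: "\<And>x y. x \<bullet> f y = f x \<bullet> y"
    and U: "subspace U" and nonneg: "\<And>x. x \<in> U \<Longrightarrow> 0 \<le> x \<bullet> f x"
    and u: "u \<in> U" "u \<bullet> f u = 0" and w: "w \<in> U"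
  shows "w \<bullet> f u = 0"
proof (rule quadratic_nonneg_imp_linear_coeff_eq_0)
  fix t
  have "0 \<le> (u + t *\<^sub>R w) \<bullet> f (u + t *\<^sub>R w)"
    using U u w by (intro nonneg subspace_add subspace_scale)
  also have "\<dots> = u \<bullet> f u + t * (u \<bullet> f w) + t * (w \<bullet> f u) + t * t * (w \<bullet> f w)"
    by (simp add: linear_add[OF f] linear_scale[OF f] inner_add_left inner_add_right algebra_simps)
  also have "u \<bullet> f w = w \<bullet> f u"
    by (metis sym inner_commute)
  finally show "0 \<le> 2 * t * (w \<bullet> f u) + t\<^sup>2 * (w \<bullet> f w)"
    using u(2) by (simp add: power2_eq_square)
qed

lemma inner_matrix_vector_sym:
  fixes A :: "real^'n^'n"
  assumes "transpose A = A"
  shows "x \<bullet> (A *v y) = (A *v x) \<bullet> y"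
  by (metis assms dot_lmul_matrix transpose_matrix_vector)

lemma transpose_eq_if_inner_sym:
  fixes A :: "real^'n^'n"
  assumes "\<And>x y. x \<bullet> (A *v y) = (A *v x) \<bullet> y"
  shows "transpose A = A"
proof -
  have "transpose A *v x = A *v x" for x
  proof -
    have "(transpose A *v x - A *v x) \<bullet> y = 0" for y
      by (simp add: inner_diff_left assms dot_lmul_matrix)
    then show ?thesis by (metis inner_eq_zero_iff eq_iff_diff_eq_0)
  qed
  then show ?thesis by (simp add: matrix_eq)
qed

lemma psd_mat_iff:
  fixes A :: "real^'n^'n"
  shows "psd_mat A \<longleftrightarrow> (\<forall>x y. x \<bullet> (A *v y) = (A *v x) \<bullet> y) \<and> (\<forall>x. 0 \<le> x \<bullet> (A *v x))"
  unfolding psd_mat_def using inner_matrix_vector_sym transpose_eq_if_inner_sym by metis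

lemma psd_mat_quadratic_form_eq_0:
  fixes A :: "real^'n^'n"
  assumes "psd_mat A" "x \<bullet> (A *v x) = 0"
  shows "A *v x = 0"
proof -
  have "(A *v x) \<bullet> (A *v x) = 0"
    using assms(1) unfolding psd_mat_iff
    by (intro nonneg_form_vanishing_imp_orthogonal[OF matrix_vector_mul_linear _ subspace_UNIV _
          UNIV_I assms(2) UNIV_I]) blast+
  then show ?thesis by simp
qed

lemma outer_mult_vector: "outer x y *v v = (y \<bullet> v) *\<^sub>R x"
  by (simp add: outer_def matrix_vector_mult_def vec_eq_iff inner_vec_def sum_distrib_left mult_ac)

lemma sum_matrix_vector_mult:
  "finite I \<Longrightarrow> (\<Sum>i\<in>I. A i :: real^'n^'m) *v x = (\<Sum>i\<in>I. A i *v x)"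
  by (induction I rule: finite_induct) (simp_all add: matrix_vector_mult_add_rdistrib)

lemma psd_mat_outer_self: "psd_mat (outer x x)"
  unfolding psd_mat_iff outer_mult_vector by (simp add: inner_commute)

lemma psd_mat_add: "psd_mat A \<Longrightarrow> psd_mat B \<Longrightarrow> psd_mat (A + B)"
  unfolding psd_mat_iff matrix_vector_mult_add_rdistrib inner_add_left inner_add_right
  by (metis add_nonneg_nonneg)

lemma psd_mat_sum:
  "finite I \<Longrightarrow> (\<And>i. i \<in> I \<Longrightarrow> psd_mat (A i)) \<Longrightarrow> psd_mat (\<Sum>i\<in>I. A i :: real^'n^'n)"
proof (induction I rule: finite_induct)
  case empty
  show ?case by (simp add: psd_mat_iff)
qed (simp add: psd_mat_add)

lemma psd_mat_scaleR: "0 \<le> c \<Longrightarrow> psd_mat A \<Longrightarrow> psd_mat (c *\<^sub>R A)"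
  unfolding psd_mat_iff scaleR_matrix_vector_assoc[symmetric] inner_scaleR_right inner_scaleR_left
  by (metis mult_nonneg_nonneg)

section \<open>Spectral theorem for symmetric matrices\<close>

lemma quadratic_form_max_on_unit_sphere:
  fixes A :: "real^'n^'n"
  assumes U: "subspace U" "U \<noteq> {0}"
  obtains u where "u \<in> U" "norm u = 1"
    "\<And>y. y \<in> U \<Longrightarrow> y \<bullet> (A *v y) \<le> (u \<bullet> (A *v u)) * (norm y)\<^sup>2"
proof -
  define K where "K = sphere 0 1 \<inter> U"
  have "compact K"
    unfolding K_def by (simp add: U closed_subspace compact_Int_closed)
  moreover have "continuous_on K (\<lambda>x. x \<bullet> (A *v x))"
    by (intro continuous_intros matrix_vector_mult_linear_continuous_on)
  ultimately have "compact ((\<lambda>x. x \<bullet> (A *v x)) ` K)"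
    using compact_continuous_image by blast
  moreover obtain x where x: "x \<in> U" "x \<noteq> 0" using U subspace_0 by blast
  then have "x /\<^sub>R norm x \<in> K" using U unfolding K_def by (simp add: subspace_scale)
  ultimately obtain u where u: "u \<in> K" and max: "\<And>y. y \<in> K \<Longrightarrow> y \<bullet> (A *v y) \<le> u \<bullet> (A *v u)"
    using compact_attains_sup[of "(\<lambda>x. x \<bullet> (A *v x)) ` K"] by blast
  have "y \<bullet> (A *v y) \<le> (u \<bullet> (A *v u)) * (norm y)\<^sup>2" if y: "y \<in> U" for y
  proof (cases "y = 0")
    case False
    have "y /\<^sub>R norm y \<in> K" using y False U unfolding K_def by (simp add: subspace_scale)
    then have "(y /\<^sub>R norm y) \<bullet> (A *v (y /\<^sub>R norm y)) \<le> u \<bullet> (A *v u)" by (rule max)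
    then show ?thesis
      using False by (simp add: matrix_vector_mult_scaleR power2_eq_square field_simps)
  qed simp
  moreover have "u \<in> U" "norm u = 1" using u unfolding K_def by auto
  ultimately show thesis using that by blast
qed

lemma symmetric_matrix_eigenvector_in_invariant_subspace:
  fixes A :: "real^'n^'n"
  assumes sym: "transpose A = A" and U: "subspace U" "U \<noteq> {0}"
    and invariant: "\<And>x. x \<in> U \<Longrightarrow> A *v x \<in> U"
  obtains u m where "u \<in> U" "norm u = 1" "A *v u = m *\<^sub>R u"
proof -
  obtain u where u: "u \<in> U" "norm u = 1"
    and max: "\<And>y. y \<in> U \<Longrightarrow> y \<bullet> (A *v y) \<le> (u \<bullet> (A *v u)) * (norm y)\<^sup>2"
    using quadratic_form_max_on_unit_sphere[OF U] by blast
  define m where "m = u \<bullet> (A *v u)"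
  define f where "f x = m *\<^sub>R x - A *v x" for x
  have lin: "linear f"
    unfolding f_def
    by (rule linearI) (simp_all add: scaleR_add_right matrix_vector_right_distrib
        scaleR_right_diff_distrib matrix_vector_mult_scaleR)
  have sym_f: "x \<bullet> f y = f x \<bullet> y" for x y
    using inner_matrix_vector_sym[OF sym] by (simp add: f_def inner_diff_left inner_diff_right)
  have nonneg: "0 \<le> x \<bullet> f x" if "x \<in> U" for x
    using max[OF that] by (simp add: f_def m_def inner_diff_right power2_norm_eq_inner)
  have "u \<bullet> f u = 0"
    using u(2) by (simp add: f_def m_def inner_diff_right dot_square_norm)
  moreover have "f u \<in> U"
    unfolding f_def using U u invariant by (simp add: subspace_diff subspace_scale)
  ultimately have "f u \<bullet> f u = 0"
    using nonneg_form_vanishing_imp_orthogonal[OF lin sym_f U(1)] nonneg u(1) by blast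
  then have "A *v u = m *\<^sub>R u" by (simp add: f_def)
  with u show thesis by (rule that)
qed

definition orthonormal_eigenvectors :: "real^'n^'n \<Rightarrow> (real^'n) set \<Rightarrow> bool" where
  "orthonormal_eigenvectors A B \<longleftrightarrow>
     pairwise orthogonal B \<and> (\<forall>b\<in>B. norm b = 1 \<and> (\<exists>m. A *v b = m *\<^sub>R b))"

lemma orthonormal_eigenvectors_inner:
  assumes "orthonormal_eigenvectors A B" "b \<in> B" "c \<in> B"
  shows "c \<bullet> b = (if c = b then 1 else 0)"
  using assms unfolding orthonormal_eigenvectors_def pairwise_def orthogonal_def
  by (auto simp: norm_eq_1)

lemma orthonormal_eigenvectors_independent:
  "orthonormal_eigenvectors A B \<Longrightarrow> independent B"
  unfolding orthonormal_eigenvectors_def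
  by (metis norm_zero pairwise_orthogonal_independent zero_neq_one)

lemma orthonormal_eigenvectors_finite:
  "orthonormal_eigenvectors A B \<Longrightarrow> finite B"
  unfolding orthonormal_eigenvectors_def using pairwise_orthogonal_imp_finite by blast

lemma orthonormal_eigenvectors_extend:
  fixes A :: "real^'n^'n"
  assumes sym: "transpose A = A" and B: "orthonormal_eigenvectors A B"
    and small: "card B < CARD('n)"
  obtains u where "u \<notin> B" "orthonormal_eigenvectors A (insert u B)"
proof -
  define U where "U = {y. \<forall>b\<in>B. orthogonal b y}"
  have U: "subspace U" unfolding U_def by (rule subspace_orthogonal_to_vectors)
  have "dim B < DIM(real^'n)"
    using small orthonormal_eigenvectors_independent[OF B] by (simp add: dim_eq_card_independent)
  then obtain x where "x \<noteq> 0" "\<And>y. y \<in> span B \<Longrightarrow> orthogonal x y"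
    using orthogonal_to_subspace_exists by blast
  then have "x \<in> U" "x \<noteq> 0"
    unfolding U_def using span_base orthogonal_commute by blast+
  then have "U \<noteq> {0}" by blast
  moreover have "A *v y \<in> U" if y: "y \<in> U" for y
    unfolding U_def
  proof (intro CollectI ballI)
    fix b assume b: "b \<in> B"
    then obtain m where m: "A *v b = m *\<^sub>R b"
      using B unfolding orthonormal_eigenvectors_def by blast
    have "b \<bullet> (A *v y) = m * (b \<bullet> y)"
      by (simp add: inner_matrix_vector_sym[OF sym] m)
    then show "orthogonal b (A *v y)"
      using y b unfolding U_def orthogonal_def by simp
  qed
  ultimately obtain u m where u: "u \<in> U" "norm u = 1" "A *v u = m *\<^sub>R u"
    using symmetric_matrix_eigenvector_in_invariant_subspace[OF sym U] by blast
  have "u \<notin> B"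
    using u(1,2) unfolding U_def orthogonal_def by (auto simp: norm_eq_1)
  moreover have "orthonormal_eigenvectors A (insert u B)"
    using B u unfolding orthonormal_eigenvectors_def U_def pairwise_insert
    by (auto simp: orthogonal_commute)
  ultimately show thesis by (rule that)
qed

theorem symmetric_matrix_orthonormal_eigenbasis:
  fixes A :: "real^'n^'n"
  assumes sym: "transpose A = A"
  obtains B where "orthonormal_eigenvectors A B" "span B = UNIV"
proof -
  have "\<exists>B. orthonormal_eigenvectors A B \<and> card B = k" if "k \<le> CARD('n)" for k
    using that
  proof (induction k)
    case 0
    show ?case by (intro exI[of _ "{}"]) (simp add: orthonormal_eigenvectors_def)
  next
    case (Suc k)
    then obtain B where B: "orthonormal_eigenvectors A B" "card B = k" by auto
    with Suc.prems obtain u where u: "u \<notin> B" "orthonormal_eigenvectors A (insert u B)"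
      using orthonormal_eigenvectors_extend[OF sym] by (auto simp: Suc_le_eq)
    have "card (insert u B) = Suc k"
      using u(1) B orthonormal_eigenvectors_finite[OF B(1)] by simp
    with u(2) show ?case by blast
  qed
  then obtain B where B: "orthonormal_eigenvectors A B" "card B = CARD('n)" by blast
  then have "dim B = DIM(real^'n)"
    using orthonormal_eigenvectors_independent[OF B(1)] by (simp add: dim_eq_card_independent)
  then have "span B = UNIV" using dim_eq_full by blast
  with B(1) show thesis by (rule that)
qed

section \<open>Square roots of positive semidefinite matrices\<close>

lemma matrix_eq_if_eq_on_spanning_set:
  fixes A C :: "real^'n^'m"
  assumes "span B = UNIV" and "\<And>b. b \<in> B \<Longrightarrow> A *v b = C *v b"
  shows "A = C"
proof -
  have "A *v x = C *v x" for x
  proof -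
    have "x \<in> span B" using assms(1) by simp
    with assms(2) show ?thesis
      using linear_eq_on_span[OF matrix_vector_mul_linear matrix_vector_mul_linear, of B] by blast
  qed
  then show ?thesis by (simp add: matrix_eq)
qed

lemma orthonormal_outer_sum_mult_vector:
  assumes B: "orthonormal_eigenvectors A B" and b: "b \<in> B"
  shows "(\<Sum>c\<in>B. \<mu> c *\<^sub>R outer c c) *v b = \<mu> b *\<^sub>R b"
proof -
  have "(\<Sum>c\<in>B. \<mu> c *\<^sub>R outer c c) *v b = (\<Sum>c\<in>B. (\<mu> c * (c \<bullet> b)) *\<^sub>R c)"
    using orthonormal_eigenvectors_finite[OF B]
    by (simp add: sum_matrix_vector_mult scaleR_matrix_vector_assoc[symmetric] outer_mult_vector)
  also have "\<dots> = (\<Sum>c\<in>B. if c = b then \<mu> c *\<^sub>R c else 0)"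
    using orthonormal_eigenvectors_inner[OF B b] by (intro sum.cong) auto
  also have "\<dots> = \<mu> b *\<^sub>R b"
    using orthonormal_eigenvectors_finite[OF B] b by (simp add: sum.delta)
  finally show ?thesis .
qed

theorem psd_mat_sqrt_exists:
  fixes A :: "real^'n^'n"
  assumes A: "psd_mat A"
  obtains S where "psd_mat S" "S ** S = A"
proof -
  obtain B where B: "orthonormal_eigenvectors A B" "span B = UNIV"
    using A symmetric_matrix_orthonormal_eigenbasis unfolding psd_mat_def by blast
  define ev where "ev b = b \<bullet> (A *v b)" for b
  have eig: "A *v b = ev b *\<^sub>R b" if b: "b \<in> B" for b
  proof -
    obtain m where m: "A *v b = m *\<^sub>R b"
      using B(1) b unfolding orthonormal_eigenvectors_def by blast
    then have "ev b = m"
      using orthonormal_eigenvectors_inner[OF B(1) b b] by (simp add: ev_def)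
    with m show ?thesis by simp
  qed
  have ev_nonneg: "0 \<le> ev b" for b
    using A unfolding ev_def psd_mat_def by blast
  define S where "S = (\<Sum>c\<in>B. sqrt (ev c) *\<^sub>R outer c c)"
  have "psd_mat S"
    unfolding S_def using orthonormal_eigenvectors_finite[OF B(1)]
    by (intro psd_mat_sum psd_mat_scaleR psd_mat_outer_self) (simp_all add: ev_nonneg)
  moreover have "S ** S = A"
  proof (rule matrix_eq_if_eq_on_spanning_set[OF B(2)])
    fix b assume b: "b \<in> B"
    have "(S ** S) *v b = sqrt (ev b) *\<^sub>R sqrt (ev b) *\<^sub>R b"
      unfolding S_def
      by (simp add: matrix_vector_mul_assoc[symmetric] orthonormal_outer_sum_mult_vector[OF B(1) b]
          matrix_vector_mult_scaleR)
    also have "\<dots> = A *v b"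
      using ev_nonneg[of b] by (simp add: eig[OF b])
    finally show "(S ** S) *v b = A *v b" .
  qed
  ultimately show thesis by (rule that)
qed

lemma psd_mat_sqrt_difference_eigenvector:
  fixes S T :: "real^'n^'n"
  assumes S: "psd_mat S" and T: "psd_mat T" and sq: "S ** S = T ** T"
    and b: "(S - T) *v b = m *\<^sub>R b"
  shows "(S - T) *v b = 0"
proof -
  have symS: "\<And>x y. x \<bullet> (S *v y) = (S *v x) \<bullet> y" and symT: "\<And>x y. x \<bullet> (T *v y) = (T *v x) \<bullet> y"
    using S T unfolding psd_mat_iff by blast+
  have b': "m *\<^sub>R b = S *v b - T *v b"
    using b by (simp add: matrix_vector_mult_diff_rdistrib)
  have "m * (b \<bullet> (S *v b)) = b \<bullet> (S *v (S *v b)) - (S *v b) \<bullet> (T *v b)"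
    using arg_cong[OF b', of "\<lambda>v. b \<bullet> (S *v v)"] symS[of b "T *v b"]
    by (simp add: matrix_vector_mult_scaleR matrix_vector_mult_diff_distrib inner_diff_right)
  moreover have "m * (b \<bullet> (T *v b)) = (S *v b) \<bullet> (T *v b) - b \<bullet> (T *v (T *v b))"
    using arg_cong[OF b', of "\<lambda>v. v \<bullet> (T *v b)"] symT[of b "T *v b"]
    by (simp add: inner_diff_left)
  moreover have "S *v (S *v b) = T *v (T *v b)"
    using sq by (simp add: matrix_vector_mul_assoc)
  ultimately have "m * (b \<bullet> (S *v b) + b \<bullet> (T *v b)) = 0"
    by (simp add: distrib_left)
  moreover have "0 \<le> b \<bullet> (S *v b)" "0 \<le> b \<bullet> (T *v b)"
    using S T unfolding psd_mat_def by blast+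
  ultimately have "m = 0 \<or> (b \<bullet> (S *v b) = 0 \<and> b \<bullet> (T *v b) = 0)"
    by auto
  then show ?thesis
  proof
    assume "m = 0"
    with b show ?thesis by simp
  next
    assume "b \<bullet> (S *v b) = 0 \<and> b \<bullet> (T *v b) = 0"
    then have "S *v b = 0" "T *v b = 0"
      using psd_mat_quadratic_form_eq_0 S T by blast+
    then show ?thesis by (simp add: matrix_vector_mult_diff_rdistrib)
  qed
qed

theorem psd_mat_sqrt_unique:
  fixes S T :: "real^'n^'n"
  assumes S: "psd_mat S" and T: "psd_mat T" and sq: "S ** S = T ** T"
  shows "S = T"
proof -
  have "transpose (S - T) = transpose S - transpose T"
    by (simp add: transpose_def vec_eq_iff)
  then have "transpose (S - T) = S - T"
    using S T unfolding psd_mat_def by simp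
  then obtain B where B: "orthonormal_eigenvectors (S - T) B" "span B = UNIV"
    by (rule symmetric_matrix_orthonormal_eigenbasis)
  have "S - T = 0"
  proof (rule matrix_eq_if_eq_on_spanning_set[OF B(2)])
    fix b assume "b \<in> B"
    then obtain m where "(S - T) *v b = m *\<^sub>R b"
      using B(1) unfolding orthonormal_eigenvectors_def by blast
    then show "(S - T) *v b = 0 *v b"
      using psd_mat_sqrt_difference_eigenvector[OF S T sq] by simp
  qed
  then show ?thesis by simp
qed

lemma mat_sqrt:
  fixes A :: "real^'n^'n"
  assumes "psd_mat A"
  shows psd_mat_sqrt: "psd_mat (mat_sqrt A)" and mat_sqrt_square: "mat_sqrt A ** mat_sqrt A = A"
proof -
  have "\<exists>!S. psd_mat S \<and> S ** S = A"
    using psd_mat_sqrt_exists[OF assms] psd_mat_sqrt_unique by metis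
  then have "psd_mat (mat_sqrt A) \<and> mat_sqrt A ** mat_sqrt A = A"
    unfolding mat_sqrt_def by (rule theI')
  then show "psd_mat (mat_sqrt A)" "mat_sqrt A ** mat_sqrt A = A" by auto
qed

section \<open>Inverses and operator norm\<close>

lemma matrix_inv:
  fixes A :: "real^'n^'n"
  assumes "invertible A"
  shows matrix_inv_right: "A ** matrix_inv A = mat 1"
    and matrix_inv_left: "matrix_inv A ** A = mat 1"
proof -
  have "\<exists>A'. A ** A' = mat 1 \<and> A' ** A = mat 1"
    using assms unfolding invertible_def by blast
  then have "A ** matrix_inv A = mat 1 \<and> matrix_inv A ** A = mat 1"
    unfolding matrix_inv_def by (rule someI_ex)
  then show "A ** matrix_inv A = mat 1" "matrix_inv A ** A = mat 1" by auto
qed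

lemma matrix_inv_cancel:
  fixes A :: "real^'n^'n"
  assumes "invertible A"
  shows matrix_inv_cancel_right: "A *v (matrix_inv A *v x) = x"
    and matrix_inv_cancel_left: "matrix_inv A *v (A *v x) = x"
  using matrix_inv[OF assms] by (metis matrix_vector_mul_assoc matrix_vector_mul_lid)+

lemma matrix_inv_eqI:
  fixes A B :: "real^'n^'n"
  assumes "\<And>x. B *v (A *v x) = x"
  shows "invertible A" and "matrix_inv A = B"
proof -
  have BA: "B ** A = mat 1"
    using assms by (simp add: matrix_eq matrix_vector_mul_assoc[symmetric])
  then have AB: "A ** B = mat 1" using matrix_left_right_inverse by blast
  with BA show inv: "invertible A" unfolding invertible_def by blast
  have "matrix_inv A = (B ** A) ** matrix_inv A" using BA by simp
  also have "\<dots> = B" using matrix_inv_right[OF inv] by (metis matrix_mul_assoc matrix_mul_rid)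
  finally show "matrix_inv A = B" .
qed

lemma matrix_inv_mul:
  fixes A B :: "real^'n^'n"
  assumes "invertible A" "invertible B"
  shows "matrix_inv (A ** B) = matrix_inv B ** matrix_inv A"
  by (rule matrix_inv_eqI(2))
     (simp add: matrix_vector_mul_assoc[symmetric] matrix_inv_cancel_left assms)

lemma matrix_inv_symmetric:
  fixes A :: "real^'n^'n"
  assumes inv: "invertible A" and sym: "transpose A = A"
  shows "transpose (matrix_inv A) = matrix_inv A"
proof (rule transpose_eq_if_inner_sym)
  fix x y
  have "x \<bullet> (matrix_inv A *v y) = (A *v (matrix_inv A *v x)) \<bullet> (matrix_inv A *v y)"
    by (simp add: matrix_inv_cancel_right[OF inv])
  also have "\<dots> = (matrix_inv A *v x) \<bullet> (A *v (matrix_inv A *v y))"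
    by (simp add: inner_matrix_vector_sym[OF sym])
  also have "\<dots> = (matrix_inv A *v x) \<bullet> y"
    by (simp add: matrix_inv_cancel_right[OF inv])
  finally show "x \<bullet> (matrix_inv A *v y) = (matrix_inv A *v x) \<bullet> y" .
qed

lemma invertible_mat_sqrt:
  fixes A :: "real^'n^'n"
  assumes "psd_mat A" "invertible A"
  shows "invertible (mat_sqrt A)"
proof -
  have "det (mat_sqrt A) * det (mat_sqrt A) = det A"
    by (simp add: det_mul[symmetric] mat_sqrt_square assms(1))
  also have "\<dots> \<noteq> 0" using assms(2) invertible_det_nz by blast
  finally show ?thesis using invertible_det_nz by fastforce
qed

lemma matrix_inv_matrix_inv:
  fixes A :: "real^'n^'n"
  assumes "invertible A"
  shows "matrix_inv (matrix_inv A) = A"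
  by (rule matrix_inv_eqI(2)) (simp add: matrix_inv_cancel_right assms)

lemma invertible_matrix_inv:
  fixes A :: "real^'n^'n"
  assumes "invertible A"
  shows "invertible (matrix_inv A)"
  by (rule matrix_inv_eqI(1)[where B = A]) (simp add: matrix_inv_cancel_right assms)

lemma diagonal_entry_eq_inner: "(B :: real^'n^'n) $ j $ j = axis j 1 \<bullet> (B *v axis j 1)"
proof -
  have "(B *v axis j 1) $ j = B $ j $ j" by (simp add: matrix_vector_mult_basis column_def)
  then show ?thesis by (simp add: cart_eq_inner_axis inner_commute)
qed

lemma psd_mat_sandwich:
  fixes A T :: "real^'n^'n"
  assumes A: "psd_mat A" and T: "transpose T = T"
  shows "psd_mat (T ** A ** T)"
  using A unfolding psd_mat_def
  by (simp add: matrix_transpose_mul T matrix_mul_assoc matrix_vector_mul_assoc[symmetric]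
      inner_matrix_vector_sym[OF T])

lemma psd_mat_matrix_inv:
  fixes A :: "real^'n^'n"
  assumes A: "psd_mat A" and inv: "invertible A"
  shows "psd_mat (matrix_inv A)"
proof -
  have "transpose (matrix_inv A) = matrix_inv A"
    using A inv unfolding psd_mat_def by (intro matrix_inv_symmetric) auto
  then have "psd_mat (matrix_inv A ** A ** matrix_inv A)"
    by (rule psd_mat_sandwich[OF A])
  then show ?thesis by (simp add: matrix_inv_left[OF inv])
qed

lemma psd_mat_diagonal_nonneg: "psd_mat A \<Longrightarrow> 0 \<le> A $ j $ j"
  unfolding psd_mat_def diagonal_entry_eq_inner by blast

lemma norm_matrix_vector_le_op_norm: "norm (A *v x) \<le> op_norm A * norm (x::real^'n)"
  unfolding op_norm_def by (rule onorm[OF matrix_vector_mul_bounded_linear])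

lemma op_norm_nonneg: "0 \<le> op_norm (A::real^'n^'n)"
  unfolding op_norm_def by (rule onorm_pos_le[OF matrix_vector_mul_bounded_linear])

theorem matrix_inv_near_identity:
  fixes A :: "real^'n^'n"
  defines "d \<equiv> op_norm (A - mat 1)"
  assumes d: "d < 1"
  shows "invertible A" and "norm (matrix_inv A *v y - y) \<le> d / (1 - d) * norm y"
proof -
  have close: "norm (A *v x - x) \<le> d * norm x" for x
    using norm_matrix_vector_le_op_norm[of "A - mat 1" x] unfolding d_def
    by (simp add: matrix_vector_mult_diff_rdistrib)
  have lower: "(1 - d) * norm x \<le> norm (A *v x)" for x
    using norm_triangle_ineq4[of "A *v x" "A *v x - x"] close[of x] by (simp add: algebra_simps)
  have "inj ((*v) A)"
  proof (rule injI)
    fix x y assume "A *v x = A *v y"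
    then have "(1 - d) * norm (x - y) \<le> 0"
      using lower[of "x - y"] by (simp add: matrix_vector_mult_diff_distrib)
    with d show "x = y" by (simp add: mult_le_0_iff)
  qed
  then show inv: "invertible A"
    using matrix_left_invertible_injective invertible_left_inverse by blast
  define x where "x = matrix_inv A *v y"
  have Ax: "A *v x = y" unfolding x_def by (rule matrix_inv_cancel_right[OF inv])
  have "norm (matrix_inv A *v y - y) = norm (A *v x - x)"
    using Ax x_def by (simp add: norm_minus_commute)
  also have "\<dots> \<le> d * norm x" by (rule close)
  also have "\<dots> \<le> d * (norm y / (1 - d))"
    using lower[of x] Ax d op_norm_nonneg[of "A - mat 1"]
    by (intro mult_left_mono) (simp_all add: d_def field_simps)
  finally show "norm (matrix_inv A *v y - y) \<le> d / (1 - d) * norm y" by simp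
qed

section \<open>The whitened perturbation bound\<close>

lemma whitened_coordinate_bound:
  fixes P W :: "real^'n^'n"
  assumes P: "transpose P = P" "invertible P" and W: "transpose W = W" "invertible W"
  shows "\<bar>(matrix_inv P *v r) $ j\<bar>
    \<le> sqrt ((matrix_inv (P ** P) ** (W ** W) ** matrix_inv (P ** P)) $ j $ j)
       * norm (matrix_inv W *v (P *v r))"
proof -
  let ?e = "axis j 1 :: real^'n"
  let ?Pi = "matrix_inv P" and ?Wi = "matrix_inv W"
  have Si: "matrix_inv (P ** P) *v x = ?Pi *v (?Pi *v x)" for x
    by (simp add: matrix_inv_mul P matrix_vector_mul_assoc)
  note symP = inner_matrix_vector_sym[OF P(1)]
    and symPi = inner_matrix_vector_sym[OF matrix_inv_symmetric[OF P(2,1)]]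
    and symW = inner_matrix_vector_sym[OF W(1)]
    and symWi = inner_matrix_vector_sym[OF matrix_inv_symmetric[OF W(2,1)]]
  define a where "a = W *v (?Pi *v (?Pi *v ?e))"
  have "a \<bullet> (?Wi *v (P *v r)) = (?Pi *v (?Pi *v ?e)) \<bullet> (P *v r)"
    unfolding a_def symWi by (simp add: matrix_inv_cancel_left W)
  also have "\<dots> = ?e \<bullet> (?Pi *v r)"
    unfolding symP by (simp add: matrix_inv_cancel_right P symPi)
  finally have num: "(?Pi *v r) $ j = a \<bullet> (?Wi *v (P *v r))"
    by (simp add: cart_eq_inner_axis inner_commute)
  have "(matrix_inv (P ** P) ** (W ** W) ** matrix_inv (P ** P)) $ j $ j
      = ?e \<bullet> (?Pi *v (?Pi *v (W *v (W *v (?Pi *v (?Pi *v ?e))))))"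
    unfolding diagonal_entry_eq_inner by (simp add: matrix_vector_mul_assoc[symmetric] Si)
  also have "\<dots> = a \<bullet> a"
    unfolding a_def symPi symW ..
  finally have den: "sqrt ((matrix_inv (P ** P) ** (W ** W) ** matrix_inv (P ** P)) $ j $ j) = norm a"
    by (simp add: norm_eq_sqrt_inner)
  show ?thesis
    unfolding num den by (rule Cauchy_Schwarz_ineq2)
qed

lemma wnorm_sandwich_matrix_inv:
  fixes S W :: "real^'n^'n"
  assumes S: "transpose S = S" "invertible S" and W: "transpose W = W" "invertible W"
  shows "wnorm (S ** matrix_inv (W ** W) ** S) (matrix_inv S *v g) = norm (matrix_inv W *v g)"
proof -
  have "(matrix_inv S *v g) \<bullet> ((S ** matrix_inv (W ** W) ** S) *v (matrix_inv S *v g))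
      = (S *v (matrix_inv S *v g)) \<bullet> (matrix_inv W *v (matrix_inv W *v g))"
    by (simp add: matrix_vector_mul_assoc[symmetric] matrix_inv_cancel_right S
        matrix_inv_mul W inner_matrix_vector_sym[OF S(1)])
  also have "\<dots> = (matrix_inv W *v g) \<bullet> (matrix_inv W *v g)"
    by (simp add: matrix_inv_cancel_right S
        inner_matrix_vector_sym[OF matrix_inv_symmetric[OF W(2,1)]])
  finally show ?thesis
    unfolding wnorm_def by (simp add: norm_eq_sqrt_inner)
qed

lemma matrix_inv_sandwich_remainder:
  fixes P Sh :: "real^'n^'n"
  defines "A \<equiv> matrix_inv P ** Sh ** matrix_inv P"
  assumes P: "invertible P" and A: "invertible A"
  shows "invertible Sh"
    and "matrix_inv Sh *v g - matrix_inv (P ** P) *v g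
      = matrix_inv P *v (matrix_inv A *v (matrix_inv P *v g) - matrix_inv P *v g)"
proof -
  have "P ** A ** P = (P ** matrix_inv P) ** Sh ** (matrix_inv P ** P)"
    by (simp add: A_def matrix_mul_assoc)
  then have Sh: "Sh = P ** A ** P"
    by (simp add: matrix_inv_left[OF P] matrix_inv_right[OF P])
  show "invertible Sh"
    unfolding Sh by (intro invertible_mult A P)
  show "matrix_inv Sh *v g - matrix_inv (P ** P) *v g
      = matrix_inv P *v (matrix_inv A *v (matrix_inv P *v g) - matrix_inv P *v g)"
    unfolding Sh
    by (simp add: matrix_inv_mul invertible_mult A P matrix_vector_mul_assoc
        matrix_vector_mult_diff_distrib)
qed

lemma norm_whitened_remainder_le:
  fixes P W :: "real^'n^'n"
  assumes P: "invertible P" and W: "invertible W"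
    and r: "norm r \<le> q * norm (matrix_inv P *v g)" and q: "0 \<le> q"
  shows "norm (matrix_inv W *v (P *v r)) \<le> cond_num (matrix_inv P ** W) * q * norm (matrix_inv W *v g)"
proof -
  have "norm (matrix_inv P *v g) \<le> op_norm (matrix_inv P ** W) * norm (matrix_inv W *v g)"
    using norm_matrix_vector_le_op_norm[of "matrix_inv P ** W" "matrix_inv W *v g"]
    by (simp add: matrix_vector_mul_assoc[symmetric] matrix_inv_cancel_right W)
  then have "norm r \<le> q * (op_norm (matrix_inv P ** W) * norm (matrix_inv W *v g))"
    by (rule order_trans[OF r mult_left_mono[OF _ q]])
  then have "norm ((matrix_inv W ** P) *v r)
      \<le> op_norm (matrix_inv W ** P) * (q * (op_norm (matrix_inv P ** W) * norm (matrix_inv W *v g)))"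
    by (rule order_trans[OF norm_matrix_vector_le_op_norm mult_left_mono[OF _ op_norm_nonneg]])
  moreover have "matrix_inv (matrix_inv P ** W) = matrix_inv W ** P"
    by (simp add: matrix_inv_mul W P invertible_matrix_inv matrix_inv_matrix_inv)
  ultimately show ?thesis
    unfolding cond_num_def by (simp add: matrix_vector_mul_assoc mult_ac)
qed

theorem whitened_inverse_perturbation_bound:
  fixes S V Sh :: "real^'n^'n" and g :: "real^'n"
  defines "D \<equiv> op_norm (matrix_inv (mat_sqrt S) ** Sh ** matrix_inv (mat_sqrt S) - mat 1)"
  assumes S: "psd_mat S" "invertible S" and V: "psd_mat V" "invertible V" and D: "D < 1"
  shows "invertible Sh"
    and "\<bar>(matrix_inv Sh *v g - matrix_inv S *v g) $ j\<bar>
      \<le> sqrt ((matrix_inv S ** V ** matrix_inv S) $ j $ j)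
         * (cond_num (matrix_inv (mat_sqrt S) ** mat_sqrt V) * (D / (1 - D))
            * wnorm (S ** matrix_inv V ** S) (matrix_inv S *v g))"
proof -
  define P where "P = mat_sqrt S"
  define W where "W = mat_sqrt V"
  define A where "A = matrix_inv P ** Sh ** matrix_inv P"
  define r where "r = matrix_inv A *v (matrix_inv P *v g) - matrix_inv P *v g"
  have P: "transpose P = P" "invertible P" "P ** P = S"
    using S psd_mat_sqrt invertible_mat_sqrt mat_sqrt_square unfolding P_def psd_mat_def by auto
  have W: "transpose W = W" "invertible W" "W ** W = V"
    using V psd_mat_sqrt invertible_mat_sqrt mat_sqrt_square unfolding W_def psd_mat_def by auto
  have A: "invertible A" and near: "norm r \<le> D / (1 - D) * norm (matrix_inv P *v g)"
    using matrix_inv_near_identity[of A] D unfolding r_def A_def D_def P_def by auto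
  show "invertible Sh"
    using matrix_inv_sandwich_remainder(1)[OF P(2)] A unfolding A_def .
  have remainder: "matrix_inv Sh *v g - matrix_inv S *v g = matrix_inv P *v r"
    using matrix_inv_sandwich_remainder(2)[OF P(2)] A unfolding A_def r_def P(3) .
  have "0 \<le> D" unfolding D_def by (rule op_norm_nonneg)
  with D have "0 \<le> D / (1 - D)" by simp
  with near have "norm (matrix_inv W *v (P *v r))
      \<le> cond_num (matrix_inv P ** W) * (D / (1 - D)) * norm (matrix_inv W *v g)"
    by (rule norm_whitened_remainder_le[OF P(2) W(2)])
  also have "norm (matrix_inv W *v g) = wnorm (S ** matrix_inv V ** S) (matrix_inv S *v g)"
    using wnorm_sandwich_matrix_inv[OF _ S(2) W(1,2)] S(1) W(3) unfolding psd_mat_def by simp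
  finally have whitened: "norm (matrix_inv W *v (P *v r))
      \<le> cond_num (matrix_inv P ** W) * (D / (1 - D)) * wnorm (S ** matrix_inv V ** S) (matrix_inv S *v g)" .
  have "0 \<le> (matrix_inv S ** V ** matrix_inv S) $ j $ j"
    using S unfolding psd_mat_def
    by (intro psd_mat_diagonal_nonneg psd_mat_sandwich V(1) matrix_inv_symmetric) auto
  then show "\<bar>(matrix_inv Sh *v g - matrix_inv S *v g) $ j\<bar>
      \<le> sqrt ((matrix_inv S ** V ** matrix_inv S) $ j $ j)
         * (cond_num (matrix_inv (mat_sqrt S) ** mat_sqrt V) * (D / (1 - D))
            * wnorm (S ** matrix_inv V ** S) (matrix_inv S *v g))"
    using whitened_coordinate_bound[OF P(1,2) W(1,2), of r j]
    unfolding remainder P(3) W(3) P_def[symmetric] W_def[symmetric]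
    by (rule order_trans[OF _ mult_left_mono[OF whitened real_sqrt_ge_zero], rotated])
qed

section \<open>Least squares\<close>

definition mean_score :: "(nat \<Rightarrow> 'a \<Rightarrow> real^'d) \<Rightarrow> (nat \<Rightarrow> 'a \<Rightarrow> real) \<Rightarrow> nat \<Rightarrow> real^'d \<Rightarrow> 'a \<Rightarrow> real^'d"
  where "mean_score X Y n b \<omega> = (1 / real n) *\<^sub>R (\<Sum>i\<in>{1..n}. (Y i \<omega> - X i \<omega> \<bullet> b) *\<^sub>R X i \<omega>)"

lemma Gamma_hat_eq: "Gamma_hat X Y n \<omega> = Sigma_hat X n \<omega> *v b + mean_score X Y n b \<omega>"
proof -
  have "Sigma_hat X n \<omega> *v b = (1 / real n) *\<^sub>R (\<Sum>i\<in>{1..n}. (X i \<omega> \<bullet> b) *\<^sub>R X i \<omega>)"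
    unfolding Sigma_hat_def
    by (simp add: scaleR_matrix_vector_assoc[symmetric] sum_matrix_vector_mult outer_mult_vector)
  then show ?thesis
    unfolding Gamma_hat_def mean_score_def
    by (simp add: scaleR_add_right[symmetric] sum.distrib[symmetric] scaleR_diff_left)
qed

lemma beta_hat_minus_eq:
  assumes "invertible (Sigma_hat X n \<omega>)"
  shows "beta_hat X Y n \<omega> - b = matrix_inv (Sigma_hat X n \<omega>) *v mean_score X Y n b \<omega>"
  unfolding beta_hat_def Gamma_hat_eq[of X Y n \<omega> b]
  by (simp add: matrix_vector_right_distrib matrix_inv_cancel_left assms)

lemma mean_psi_eq:
  "(1 / real n) *\<^sub>R (\<Sum>i\<in>{1..n}. psi M X Y n i \<omega>)
     = matrix_inv (Sigma_n M X n) *v mean_score X Y n (beta_pop M X Y n) \<omega>"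
  unfolding psi_def mean_score_def by (simp add: vec.sum matrix_vector_mult_scaleR)

lemma psd_mat_integral_outer:
  fixes Z :: "'a \<Rightarrow> real^'n"
  shows "psd_mat (integral\<^sup>L M (\<lambda>\<omega>. outer (Z \<omega>) (Z \<omega>)))"
proof (cases "integrable M (\<lambda>\<omega>. outer (Z \<omega>) (Z \<omega>))")
  case True
  have bl: "bounded_linear (\<lambda>A. x \<bullet> (A *v y))" for x y :: "real^'n"
    unfolding linear_conv_bounded_linear[symmetric]
    by (rule linearI) (simp_all add: matrix_vector_mult_add_rdistrib inner_add_right
        scaleR_matrix_vector_assoc[symmetric])
  have form: "x \<bullet> (integral\<^sup>L M (\<lambda>\<omega>. outer (Z \<omega>) (Z \<omega>)) *v y)
      = integral\<^sup>L M (\<lambda>\<omega>. (Z \<omega> \<bullet> x) * (Z \<omega> \<bullet> y))" for x y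
    using integral_bounded_linear[OF bl True] by (simp add: outer_mult_vector inner_commute mult_ac)
  show ?thesis
    unfolding psd_mat_iff
  proof (intro conjI allI)
    fix x y :: "real^'n"
    show "x \<bullet> (integral\<^sup>L M (\<lambda>\<omega>. outer (Z \<omega>) (Z \<omega>)) *v y)
        = (integral\<^sup>L M (\<lambda>\<omega>. outer (Z \<omega>) (Z \<omega>)) *v x) \<bullet> y"
      using form[of x y] form[of y x] by (simp add: inner_commute mult.commute)
    show "0 \<le> x \<bullet> (integral\<^sup>L M (\<lambda>\<omega>. outer (Z \<omega>) (Z \<omega>)) *v x)"
      unfolding form by (rule integral_nonneg_AE) simp
  qed
qed (simp add: not_integrable_integral_eq psd_mat_iff)

lemma psd_mat_Sigma_n: "psd_mat (Sigma_n M X n)"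
  unfolding Sigma_n_def by (intro psd_mat_scaleR psd_mat_sum psd_mat_integral_outer) auto

lemma psd_mat_V_n: "psd_mat (V_n M X Y n)"
  unfolding V_n_def vcov_def by (rule psd_mat_integral_outer)

lemma cond_num_nonneg: "0 \<le> cond_num A"
  unfolding cond_num_def by (intro mult_nonneg_nonneg op_norm_nonneg)

lemma wnorm_nonneg: "psd_mat A \<Longrightarrow> 0 \<le> wnorm A x"
  unfolding wnorm_def psd_mat_def by simp

lemma Max_abs_divide_le:
  fixes a c :: "'j::finite \<Rightarrow> real"
  assumes "\<And>j. \<bar>a j\<bar> \<le> c j * K" and "0 \<le> K"
  shows "Max ((\<lambda>j. \<bar>a j / c j\<bar>) ` UNIV) \<le> K"
proof (rule Max.boundedI)
  fix x assume "x \<in> (\<lambda>j. \<bar>a j / c j\<bar>) ` UNIV"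
  then obtain j where x: "x = \<bar>a j / c j\<bar>" by blast
  show "x \<le> K"
  proof (cases "0 < c j")
    case True
    then show ?thesis using assms(1)[of j] by (simp add: x abs_divide pos_divide_le_eq mult.commute)
  next
    case False
    then have "c j * K \<le> 0" using assms(2) by (simp add: mult_nonpos_nonneg)
    then have "a j = 0" using assms(1)[of j] by simp
    then show ?thesis using assms(2) by (simp add: x)
  qed
qed auto

theorem mainTheorem2:
  fixes M :: "'a measure" and X :: "nat \<Rightarrow> 'a \<Rightarrow> real^'d" and Y :: "nat \<Rightarrow> 'a \<Rightarrow> real"
    and n :: nat and \<omega> :: 'a
  assumes "prob_space M"
    and "\<And>i. i \<in> {1..n} \<Longrightarrow> X i \<in> borel_measurable M"
    and "\<And>i. i \<in> {1..n} \<Longrightarrow> Y i \<in> borel_measurable M"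
    and "\<And>i. i \<in> {1..n} \<Longrightarrow> integrable M (\<lambda>\<omega>. (norm (X i \<omega>))\<^sup>2)"
    and "\<And>i. i \<in> {1..n} \<Longrightarrow> integrable M (\<lambda>\<omega>. (Y i \<omega>)\<^sup>2)"
    and "invertible (Sigma_n M X n)"
    and "invertible (V_n M X Y n)"
    and "\<omega> \<in> space M"
    and "D_Sigma M X n \<omega> < 1"
  shows "Max ((\<lambda>j. \<bar>(beta_hat X Y n \<omega> $ j - beta_pop M X Y n $ j
              - (1 / real n) * (\<Sum>i\<in>{1..n}. psi M X Y n i \<omega> $ j))
            / sqrt ((matrix_inv (Sigma_n M X n) ** V_n M X Y n ** matrix_inv (Sigma_n M X n)) $ j $ j)\<bar>) ` UNIV)
    \<le> cond_num (matrix_inv (mat_sqrt (Sigma_n M X n)) ** mat_sqrt (V_n M X Y n))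
       * (D_Sigma M X n \<omega> / (1 - D_Sigma M X n \<omega>))
       * wnorm (Sigma_n M X n ** matrix_inv (V_n M X Y n) ** Sigma_n M X n)
           ((1 / real n) *\<^sub>R (\<Sum>i\<in>{1..n}. psi M X Y n i \<omega>))"
  \<comment> \<open>Only the two invertibility hypotheses and \<open>D_Sigma M X n \<omega> < 1\<close> are needed: the bound holds
    for each fixed outcome, and \<open>\<Sigma>\<^sub>n\<close>, \<open>V\<^sub>n\<close> are positive semidefinite even for non-integrable data.\<close>
proof -
  let ?S = "Sigma_n M X n" and ?Sh = "Sigma_hat X n \<omega>"
  let ?g = "mean_score X Y n (beta_pop M X Y n) \<omega>"
  note whitened = whitened_inverse_perturbation_bound[OF psd_mat_Sigma_n assms(6) psd_mat_V_n assms(7),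
      of ?Sh, folded D_Sigma_def, OF assms(9)]
  have error: "beta_hat X Y n \<omega> $ j - beta_pop M X Y n $ j
      - (1 / real n) * (\<Sum>i\<in>{1..n}. psi M X Y n i \<omega> $ j)
    = (matrix_inv ?Sh *v ?g - matrix_inv ?S *v ?g) $ j" for j
  proof -
    have "beta_hat X Y n \<omega> $ j - beta_pop M X Y n $ j = (matrix_inv ?Sh *v ?g) $ j"
      using arg_cong[OF beta_hat_minus_eq[OF whitened(1)], of "\<lambda>v. v $ j"] by simp
    moreover have "(1 / real n) * (\<Sum>i\<in>{1..n}. psi M X Y n i \<omega> $ j) = (matrix_inv ?S *v ?g) $ j"
      using arg_cong[OF mean_psi_eq, of "\<lambda>v. v $ j"] by (simp add: sum_component)
    ultimately show ?thesis by simp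
  qed
  show ?thesis
    unfolding error mean_psi_eq
  proof (rule Max_abs_divide_le)
    show "0 \<le> cond_num (matrix_inv (mat_sqrt ?S) ** mat_sqrt (V_n M X Y n))
       * (D_Sigma M X n \<omega> / (1 - D_Sigma M X n \<omega>))
       * wnorm (?S ** matrix_inv (V_n M X Y n) ** ?S) (matrix_inv ?S *v ?g)"
    proof -
      have "0 \<le> D_Sigma M X n \<omega>" unfolding D_Sigma_def by (rule op_norm_nonneg)
      moreover have "transpose ?S = ?S" using psd_mat_Sigma_n unfolding psd_mat_def by blast
      ultimately show ?thesis
        using assms(9) by (intro mult_nonneg_nonneg cond_num_nonneg wnorm_nonneg psd_mat_sandwich
            psd_mat_matrix_inv psd_mat_V_n assms(7)) simp_all
    qed
  qed (rule whitened(2))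
qed

end
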